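(* In the setting of the context, fix $i,j\in\{1,\dots,n-1\}$, $i\ne j$. Regard the conditional expectation $$\mathbb E_{\mathbb P}[\bar d_j\mid\bar d_i\in\mathcal W_{\delta_i}]=d-\sqrt{\frac{2}{\pi}}\,\frac{\rho_{ji}\,\sigma_j\,e^{-\frac{(d_i^*-d)^2}{2\sigma_i^2}}}{1+\mathrm{erf}\!\left(\frac{d_i^*-d}{\sqrt2\,\sigma_i}\right)}$$ as a function of the diffusion coefficient $g>0$ (all other parameters fixed). Then it is monotonically increasing in $g$ if $\rho_{ji}<0$ and monotonically decreasing in $g$ if $\rho_{ji}>0$. Moreover, for the ambiguity set $\mathcal M_g=\{g>0: (1-\epsilon)g_0^2\le g^2\le(1+\epsilon)g_0^2\}$, the distributionally robust cascading risk $$\mathcal R^{ji}:=\frac{d}{\inf_{\mathcal M_g}\mathbb E_{\mathbb P}[\bar d_j\mid\bar d_i\in\mathcal W_{\delta_i}]}-1$$ equals $\frac{d}{h(-\epsilon)}-1$ if $\rho_{ji}<0$, $\frac{d}{h(\epsilon)}-1$ if $\rho_{ji}>0$, and $0$ if $\rho_{ji}=0$, where $$h(\epsilon)=d-\sqrt{\frac{2}{\pi}}\,\frac{\rho_{ji}\,\sigma_{j,0}\sqrt{1+\epsilon}\;e^{-\frac{(d_i^*-d)^2}{2\sigma_{i,0}^2(1+\epsilon)}}}{1+\mathrm{erf}\!\left(\frac{d_i^*-d}{\sqrt{2(1+\epsilon)}\,\sigma_{i,0}}\right)}.$$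
   Context: Platoon of $n\ge 3$ vehicles with positions $\mathrm{x}_t\in\mathbb R^n$ and velocities $\mathrm{v}_t\in\mathbb R^n$ obeying $d\mathrm{x}_t=\mathrm{v}_t\,dt$, $d\mathrm{v}_t=-L\mathrm{v}_{t-\tau}dt-\beta L(\mathrm{x}_{t-\tau}-\mathrm{y})dt+g\,d\boldsymbol\xi_t$, where $L$ is the Laplacian of a connected undirected positively weighted graph with eigenvalues $0=\lambda_1<\lambda_2\le\dots\le\lambda_n$ and orthonormal eigenvectors $q_1=\frac1{\sqrt n}\mathbf 1_n,\dots,q_n$; $\mathrm{y}=[d,2d,\dots,nd]^T$, $d>0$; $\beta>0$; delay $\tau>0$; diffusion coefficient $g>0$; $\boldsymbol\xi_t$ a standard $n$-dimensional Wiener process. Stability $(\lambda_k\tau,\beta\tau)\in S$ for $k=2,\dots,n$ is assumed, with $S=\{(s_1,s_2): s_1\in(0,\pi/2),\ s_2\in(0,a/\tan a),\ a\in(0,\pi/2)\text{ solving }a\sin a=s_1\}$. The steady-state inter-vehicle distances $\bar d_k=\lim(x^{(k+1)}_t-x^{(k)}_t)$ form $\bar{\boldsymbol d}\sim\mathcal N(d\mathbf 1_{n-1},\Sigma)$ (standing known fact) with $\sigma_{kl}=g^2\frac{\tau^3}{2\pi}\sum_{m=1}^n(\tilde e_k^Tq_m)(\tilde e_l^Tq_m)f(\lambda_m\tau,\beta\tau)$, $\tilde e_k=e_{k+1}-e_k$, $f(s_1,s_2)=\int_{\mathbb R}\frac{dr}{(s_1s_2-r^2\cos r)^2+r^2(s_1-r\sin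 r)^2}$. Write $\sigma_k^2=\sigma_{kk}$ and $\rho_{ji}=\sigma_{ji}/(\sigma_i\sigma_j)$ (independent of $g$). $\mathcal W_{\delta_i}=(-\infty,d_i^* )$ with $d_i^*=d/(\delta_i+c)$, $\delta_i\ge0$, $c>0$ a constant. $g_0>0$ is a nominal estimate of $g$, $\epsilon\in(0,1)$, and $\sigma_{k,0}$ denotes $\sigma_k$ evaluated at $g=g_0$. $\mathrm{erf}(x)=\frac2{\sqrt\pi}\int_0^xe^{-t^2}dt$. *)

theory Defs
  imports "HOL-Analysis.Analysis"
begin

text \<open>Vehicles / vertices are indexed 1..n; vectors in R^n are functions nat => real
  restricted to {1..n}.  Eigenvector q m (m = 1..n) has components q m k, k = 1..n.\<close>

definition erf :: "real \<Rightarrow> real" where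
  "erf x = 2 / sqrt pi * interval_lebesgue_integral lborel (ereal 0) (ereal x) (\<lambda>t. exp (- (t\<^sup>2)))"

definition is_graph_laplacian :: "nat \<Rightarrow> (nat \<Rightarrow> nat \<Rightarrow> real) \<Rightarrow> (nat \<Rightarrow> nat \<Rightarrow> real) \<Rightarrow> bool" where
  "is_graph_laplacian n w L \<longleftrightarrow>
     (\<forall>k\<in>{1..n}. \<forall>l\<in>{1..n}. w k l = w l k \<and> w k l \<ge> 0) \<and>
     (\<forall>k\<in>{1..n}. w k k = 0) \<and>
     (\<forall>k\<in>{1..n}. \<forall>l\<in>{1..n}. L k l = (if k = l then (\<Sum>m=1..n. w k m) else - w k l)) \<and>
     (\<forall>k\<in>{1..n}. \<forall>l\<in>{1..n}.
        (k, l) \<in> {(a, b). a \<in> {1..n} \<and> b \<in> {1..n} \<and> w a b > 0}\<^sup>*)"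

definition is_eigendecomp :: "nat \<Rightarrow> (nat \<Rightarrow> nat \<Rightarrow> real) \<Rightarrow> (nat \<Rightarrow> real) \<Rightarrow> (nat \<Rightarrow> nat \<Rightarrow> real) \<Rightarrow> bool" where
  "is_eigendecomp n L lam q \<longleftrightarrow>
     (\<forall>m\<in>{1..n}. \<forall>k\<in>{1..n}. (\<Sum>l=1..n. L k l * q m l) = lam m * q m k) \<and>
     (\<forall>m\<in>{1..n}. \<forall>m'\<in>{1..n}. (\<Sum>k=1..n. q m k * q m' k) = (if m = m' then 1 else 0)) \<and>
     lam 1 = 0 \<and> 0 < lam 2 \<and> (\<forall>m. 2 \<le> m \<and> m < n \<longrightarrow> lam m \<le> lam (Suc m)) \<and>
     (\<forall>k\<in>{1..n}. q 1 k = 1 / sqrt (real n))"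

definition stab_region :: "(real \<times> real) set" where
  "stab_region = {(s1, s2). 0 < s1 \<and> s1 < pi / 2 \<and>
      (\<exists>a. 0 < a \<and> a < pi / 2 \<and> a * sin a = s1 \<and> 0 < s2 \<and> s2 < a / tan a)}"

definition fint :: "real \<Rightarrow> real \<Rightarrow> real" where
  "fint s1 s2 = (LINT r|lborel. 1 / ((s1 * s2 - r\<^sup>2 * cos r)\<^sup>2 + r\<^sup>2 * (s1 - r * sin r)\<^sup>2))"

text \<open>sigma_{kl} as a function of the diffusion coefficient g; etilde_k = e_(k+1) - e_k.\<close>
definition cov :: "nat \<Rightarrow> (nat \<Rightarrow> real) \<Rightarrow> (nat \<Rightarrow> nat \<Rightarrow> real) \<Rightarrow> real \<Rightarrow> real \<Rightarrow> real \<Rightarrow> nat \<Rightarrow> nat \<Rightarrow> real" where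
  "cov n lam q tau beta g k l = g\<^sup>2 * tau ^ 3 / (2 * pi) *
     (\<Sum>m=1..n. (q m (Suc k) - q m k) * (q m (Suc l) - q m l) * fint (lam m * tau) (beta * tau))"

definition sd :: "nat \<Rightarrow> (nat \<Rightarrow> real) \<Rightarrow> (nat \<Rightarrow> nat \<Rightarrow> real) \<Rightarrow> real \<Rightarrow> real \<Rightarrow> real \<Rightarrow> nat \<Rightarrow> real" where
  "sd n lam q tau beta g k = sqrt (cov n lam q tau beta g k k)"

definition corr :: "nat \<Rightarrow> (nat \<Rightarrow> real) \<Rightarrow> (nat \<Rightarrow> nat \<Rightarrow> real) \<Rightarrow> real \<Rightarrow> real \<Rightarrow> real \<Rightarrow> nat \<Rightarrow> nat \<Rightarrow> real" where
  "corr n lam q tau beta g j i = cov n lam q tau beta g j i / (sd n lam q tau beta g i * sd n lam q tau beta g j)"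

text \<open>The closed-form conditional expectation E[dbar_j | dbar_i in W_delta_i] with d_i^* = ds.\<close>
definition condexp :: "nat \<Rightarrow> (nat \<Rightarrow> real) \<Rightarrow> (nat \<Rightarrow> nat \<Rightarrow> real) \<Rightarrow> real \<Rightarrow> real \<Rightarrow> real \<Rightarrow> real \<Rightarrow> nat \<Rightarrow> nat \<Rightarrow> real \<Rightarrow> real" where
  "condexp n lam q tau beta d ds i j g =
     d - sqrt (2 / pi) * (corr n lam q tau beta g j i * sd n lam q tau beta g j *
         exp (- ((ds - d)\<^sup>2 / (2 * (sd n lam q tau beta g i)\<^sup>2))))
       / (1 + erf ((ds - d) / (sqrt 2 * sd n lam q tau beta g i)))"

definition hfun :: "nat \<Rightarrow> (nat \<Rightarrow> real) \<Rightarrow> (nat \<Rightarrow> nat \<Rightarrow> real) \<Rightarrow> real \<Rightarrow> real \<Rightarrow> real \<Rightarrow> real \<Rightarrow> real \<Rightarrow> nat \<Rightarrow> nat \<Rightarrow> real \<Rightarrow> real" where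
  "hfun n lam q tau beta g0 d ds i j e =
     d - sqrt (2 / pi) * (corr n lam q tau beta g0 j i * sd n lam q tau beta g0 j * sqrt (1 + e) *
         exp (- ((ds - d)\<^sup>2 / (2 * (sd n lam q tau beta g0 i)\<^sup>2 * (1 + e)))))
       / (1 + erf ((ds - d) / (sqrt (2 * (1 + e)) * sd n lam q tau beta g0 i)))"

definition ambiguity_set :: "real \<Rightarrow> real \<Rightarrow> real set" where
  "ambiguity_set g0 eps = {g. 0 < g \<and> (1 - eps) * g0\<^sup>2 \<le> g\<^sup>2 \<and> g\<^sup>2 \<le> (1 + eps) * g0\<^sup>2}"

definition cascading_risk :: "nat \<Rightarrow> (nat \<Rightarrow> real) \<Rightarrow> (nat \<Rightarrow> nat \<Rightarrow> real) \<Rightarrow> real \<Rightarrow> real \<Rightarrow> real \<Rightarrow> real \<Rightarrow> real \<Rightarrow> real \<Rightarrow> nat \<Rightarrow> nat \<Rightarrow> real" where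
  "cascading_risk n lam q tau beta g0 eps d ds i j =
     d / (INF g\<in>ambiguity_set g0 eps. condexp n lam q tau beta d ds i j g) - 1"

end

(*
  Every covariance is proportional to g^2, so the correlation rho does not depend on g and the
  standard deviations are proportional to g. With k = (d_i^* - d) / (sqrt 2 sigma_i(1)), the
  conditional expectation is d - sqrt (2/pi) rho sigma_j(1) G(g), where
  G(g) = g exp (-(k/g)^2) / (1 + erf (k/g)). The derivative of G has the sign of
  (1 + 2u^2)(1 + erf u) + (2/sqrt pi) u exp (-u^2) at u = k/g, and this is nonnegative: it is
  (1 + 2u^2) times a function whose derivative is positive and which tends to 0 at minus
  infinity. So G is nondecreasing, the sign of rho decides the monotonicity in g, and the infimum
  over the ambiguity set [g0 sqrt (1 - eps), g0 sqrt (1 + eps)] is attained at an endpoint,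
  where the conditional expectation is h(-eps) or h(eps).
*)
theory Submission
  imports Defs "HOL-Probability.Distributions" "HOL-Real_Asymp.Real_Asymp"
begin

lemma mono_on_if_deriv_nonneg:
  fixes f :: "real \<Rightarrow> real"
  assumes "is_interval I"
    and "\<And>x. x \<in> I \<Longrightarrow> (f has_real_derivative f' x) (at x)"
    and "\<And>x. x \<in> I \<Longrightarrow> 0 \<le> f' x"
  shows "mono_on I f"
proof (rule mono_onI)
  fix r s assume "r \<in> I" "s \<in> I" "r \<le> s"
  then have "x \<in> I" if "r \<le> x" "x \<le> s" for x
    using \<open>is_interval I\<close> that unfolding is_interval_1 by blast
  then show "f r \<le> f s"
    using \<open>r \<le> s\<close> assms(2,3) by (intro deriv_nonneg_imp_mono[of r s f f']) auto
qed

lemma cINF_atLeastAtMost_mono_on: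
  fixes f :: "'a::linorder \<Rightarrow> 'b::conditionally_complete_lattice"
  assumes "mono_on {a..b} f" and "a \<le> b"
  shows "(INF x\<in>{a..b}. f x) = f a"
  using assms by (intro cInf_eq_minimum) (auto intro: mono_onD)

lemma cINF_atLeastAtMost_antimono_on:
  fixes f :: "'a::linorder \<Rightarrow> 'b::conditionally_complete_lattice"
  assumes "antimono_on {a..b} f" and "a \<le> b"
  shows "(INF x\<in>{a..b}. f x) = f b"
  using assms by (intro cInf_eq_minimum) (auto intro: monotone_onD)

lemma erf_has_real_derivative: "(erf has_real_derivative 2 / sqrt pi * exp (- (x\<^sup>2))) (at x)"
proof -
  define a b where "a = - \<bar>x\<bar> - 1" and "b = \<bar>x\<bar> + 1"
  have "continuous_on {a..b} (\<lambda>t::real. exp (- (t\<^sup>2)))"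
    by (intro continuous_intros)
  then have "((\<lambda>u. LBINT t=ereal 0..ereal u. exp (- (t\<^sup>2))) has_vector_derivative exp (- (x\<^sup>2)))
      (at x within {a..b})"
    by (rule interval_integral_FTC2[rotated 2]) (auto simp: a_def b_def)
  moreover have "at x within {a..b} = at x"
    by (rule at_within_Icc_at) (auto simp: a_def b_def)
  ultimately have "((\<lambda>u. LBINT t=ereal 0..ereal u. exp (- (t\<^sup>2))) has_real_derivative exp (- (x\<^sup>2))) (at x)"
    by (simp add: has_real_derivative_iff_has_vector_derivative)
  then show ?thesis
    unfolding erf_def[abs_def] by (rule DERIV_cmult)
qed

lemma erf_0 [simp]: "erf 0 = 0"
  by (simp add: erf_def)

lemma erf_minus: "erf (- x) = - erf x"
proof -
  have "(LBINT t=ereal 0..ereal (- x). exp (- (t\<^sup>2))) = (LBINT t=ereal x..ereal 0. exp (- ((- t)\<^sup>2)))"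
    using interval_integral_reflect[of "ereal 0" "ereal (- x)" "\<lambda>t. exp (- (t\<^sup>2))"] by simp
  also have "\<dots> = - (LBINT t=ereal 0..ereal x. exp (- (t\<^sup>2)))"
    by (subst interval_integral_endpoints_reverse) simp
  finally show ?thesis
    unfolding erf_def by simp
qed

lemma erf_mono: "mono erf"
  using mono_on_if_deriv_nonneg[OF is_interval_univ erf_has_real_derivative] by simp

lemma erf_le_1: "erf x \<le> 1"
proof (cases "0 \<le> x")
  case True
  have half_gauss: "has_bochner_integral lborel (\<lambda>t. indicator {0..} t *\<^sub>R exp (- t\<^sup>2)) (sqrt pi / 2)"
    by (rule gaussian_moment_0)
  have "(LBINT t=ereal 0..ereal x. exp (- (t\<^sup>2))) = (\<integral>t. indicator {0..x} t *\<^sub>R exp (- (t\<^sup>2)) \<partial>lborel)"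
    using True by (simp add: interval_integral_Icc set_lebesgue_integral_def)
  also have "\<dots> \<le> (\<integral>t. indicator {0..} t *\<^sub>R exp (- (t\<^sup>2)) \<partial>lborel)"
    using half_gauss unfolding has_bochner_integral_iff
    by (intro integral_mono_AE') (auto split: split_indicator)
  also have "\<dots> = sqrt pi / 2"
    using half_gauss by (simp add: has_bochner_integral_iff)
  finally show ?thesis
    unfolding erf_def by (simp add: field_simps)
next
  case False
  then show ?thesis
    using monoD[OF erf_mono, of x 0] by simp
qed

lemma erf_ge_minus_1: "- 1 \<le> erf x"
  using erf_le_1[of "- x"] by (simp add: erf_minus)

definition erf_tail_gap :: "real \<Rightarrow> real" where
  "erf_tail_gap u = 1 + erf u + 2 / sqrt pi * exp (- (u\<^sup>2)) * u / (1 + 2 * u\<^sup>2)"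

lemma erf_tail_gap_has_real_derivative:
  "(erf_tail_gap has_real_derivative 2 / sqrt pi * exp (- (u\<^sup>2)) * 2 / (1 + 2 * u\<^sup>2)\<^sup>2) (at u)"
proof -
  \<comment> \<open>Naming the constant hides the square root from the field normalization, which stalls on it.\<close>
  define c where "c = 2 / sqrt pi"
  have erf': "(erf has_real_derivative c * exp (- (x\<^sup>2))) (at x)" for x
    unfolding c_def by (rule erf_has_real_derivative)
  have denom_nonzero: "1 + 2 * u\<^sup>2 \<noteq> 0"
    by (smt (verit) zero_le_power2)
  show ?thesis
    unfolding erf_tail_gap_def[abs_def] c_def[symmetric]
    by (rule derivative_eq_intros refl erf' denom_nonzero)+
       (use denom_nonzero in \<open>simp add: divide_simps, simp add: power2_eq_square algebra_simps\<close>)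
qed

lemma erf_tail_gap_mono: "mono erf_tail_gap"
  using mono_on_if_deriv_nonneg[OF is_interval_univ erf_tail_gap_has_real_derivative] by simp

lemma erf_tail_gap_nonneg: "0 \<le> erf_tail_gap u"
proof (rule ccontr)
  define tail where "tail x = 2 / sqrt pi * exp (- (x\<^sup>2)) * x / (1 + 2 * x\<^sup>2)" for x
  assume "\<not> 0 \<le> erf_tail_gap u"
  moreover have "(tail \<longlongrightarrow> 0) at_bot"
    unfolding tail_def by real_asymp
  ultimately have "eventually (\<lambda>x. erf_tail_gap u < tail x) at_bot"
    by (intro order_tendstoD(1)) auto
  then have "eventually (\<lambda>x. erf_tail_gap u < tail x \<and> x \<le> u) at_bot"
    using eventually_le_at_bot by (rule eventually_conj)
  then obtain x where x: "erf_tail_gap u < tail x" "x \<le> u"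
    by (auto simp: eventually_at_bot_linorder)
  have "tail x \<le> erf_tail_gap x"
    using erf_ge_minus_1[of x] by (simp add: erf_tail_gap_def tail_def)
  also have "\<dots> \<le> erf_tail_gap u"
    using \<open>x \<le> u\<close> by (rule monoD[OF erf_tail_gap_mono])
  finally show False
    using x(1) by simp
qed

lemma one_plus_erf_pos: "0 < 1 + erf u"
proof (cases "0 \<le> u")
  case True
  then show ?thesis
    using monoD[OF erf_mono True] by simp
next
  case False
  have "0 < 2 / sqrt pi * exp (- (u\<^sup>2)) * (- u) / (1 + 2 * u\<^sup>2)"
    using False by (intro divide_pos_pos mult_pos_pos) (auto intro: add_pos_nonneg)
  then show ?thesis
    using erf_tail_gap_nonneg[of u] by (simp add: erf_tail_gap_def)
qed

lemma erf_tail_bound: "0 \<le> (1 + 2 * u\<^sup>2) * (1 + erf u) + 2 / sqrt pi * exp (- (u\<^sup>2)) * u"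
proof -
  have denom_pos: "0 < 1 + 2 * u\<^sup>2"
    by (simp add: add_pos_nonneg)
  then have cancel: "(1 + 2 * u\<^sup>2) * (X / (1 + 2 * u\<^sup>2)) = X" for X
    by simp
  have "(1 + 2 * u\<^sup>2) * erf_tail_gap u
      = (1 + 2 * u\<^sup>2) * (1 + erf u) + 2 / sqrt pi * exp (- (u\<^sup>2)) * u"
    unfolding erf_tail_gap_def distrib_left cancel ..
  then show ?thesis
    using denom_pos erf_tail_gap_nonneg[of u] by (metis mult_nonneg_nonneg less_imp_le)
qed

(* Up to the factor sqrt (pi / 2), this is g times the inverse Mills ratio phi/Phi at sqrt 2 * k / g. *)
definition scaled_inverse_mills :: "real \<Rightarrow> real \<Rightarrow> real" where
  "scaled_inverse_mills k g = g * exp (- ((k / g)\<^sup>2)) / (1 + erf (k / g))"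

lemma scaled_inverse_mills_has_real_derivative:
  assumes "g \<noteq> 0"
  shows "(scaled_inverse_mills k has_real_derivative
      exp (- ((k / g)\<^sup>2)) * ((1 + 2 * (k / g)\<^sup>2) * (1 + erf (k / g))
        + 2 / sqrt pi * exp (- ((k / g)\<^sup>2)) * (k / g)) / (1 + erf (k / g))\<^sup>2) (at g)"
proof -
  have denom_nonzero: "1 + erf (k / g) \<noteq> 0"
    using one_plus_erf_pos[of "k / g"] by simp
  note erf_chain = DERIV_chain2[OF erf_has_real_derivative]
  show ?thesis
    unfolding scaled_inverse_mills_def[abs_def]
    by (rule derivative_eq_intros refl erf_chain assms denom_nonzero)+
       (use assms denom_nonzero in \<open>simp add: field_simps power2_eq_square\<close>)
qed

lemma scaled_inverse_mills_mono_on: "mono_on {0<..} (scaled_inverse_mills k)"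
proof (rule mono_on_if_deriv_nonneg)
  show "is_interval {0::real<..}"
    unfolding is_interval_1 by auto
  show "(scaled_inverse_mills k has_real_derivative
      exp (- ((k / g)\<^sup>2)) * ((1 + 2 * (k / g)\<^sup>2) * (1 + erf (k / g))
        + 2 / sqrt pi * exp (- ((k / g)\<^sup>2)) * (k / g)) / (1 + erf (k / g))\<^sup>2) (at g)"
    if "g \<in> {0<..}" for g
    using that by (intro scaled_inverse_mills_has_real_derivative) simp
  show "0 \<le> exp (- ((k / g)\<^sup>2)) * ((1 + 2 * (k / g)\<^sup>2) * (1 + erf (k / g))
        + 2 / sqrt pi * exp (- ((k / g)\<^sup>2)) * (k / g)) / (1 + erf (k / g))\<^sup>2" for g
    using erf_tail_bound[of "k / g"] by simp
qed

lemma cov_scale: "cov n lam q tau beta g k l = g\<^sup>2 * cov n lam q tau beta 1 k l"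
  by (simp add: cov_def)

lemma sd_scale: "sd n lam q tau beta g k = \<bar>g\<bar> * sd n lam q tau beta 1 k"
  unfolding sd_def by (subst cov_scale) (simp add: real_sqrt_mult)

lemma corr_scale:
  assumes "g \<noteq> 0"
  shows "corr n lam q tau beta g j i = corr n lam q tau beta 1 j i"
proof -
  have abs_sq: "\<bar>g\<bar> * a * (\<bar>g\<bar> * b) = g\<^sup>2 * (a * b)" for a b :: real
    by (cases "0 \<le> g") (simp_all add: power2_eq_square ac_simps)
  show ?thesis
    unfolding corr_def sd_scale[of _ _ _ _ _ g] cov_scale[of _ _ _ _ _ g] abs_sq
    using assms by simp
qed

lemma fint_nonneg: "0 \<le> fint s1 s2"
  unfolding fint_def by (rule integral_nonneg_AE) auto

lemma cov_diag_nonneg: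
  assumes "0 \<le> tau"
  shows "0 \<le> cov n lam q tau beta g k k"
  unfolding cov_def using assms
  by (intro mult_nonneg_nonneg divide_nonneg_pos sum_nonneg
      mult_nonneg_nonneg[OF zero_le_square fint_nonneg]) auto

lemma sd_pos_if_corr_nonzero:
  assumes "0 \<le> tau" and "corr n lam q tau beta g j i \<noteq> 0"
  shows "0 < sd n lam q tau beta g j"
proof -
  have "sd n lam q tau beta g j \<noteq> 0"
    using assms(2) by (auto simp: corr_def)
  moreover have "0 \<le> sd n lam q tau beta g j"
    unfolding sd_def using cov_diag_nonneg[OF assms(1)] by simp
  ultimately show ?thesis
    by simp
qed

lemma condexp_eq_scaled_inverse_mills:
  assumes "0 < g"
  shows "condexp n lam q tau beta d ds i j g = d - sqrt (2 / pi) * corr n lam q tau beta 1 j i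
    * sd n lam q tau beta 1 j * scaled_inverse_mills ((ds - d) / (sqrt 2 * sd n lam q tau beta 1 i)) g"
proof -
  define s k where "s = sd n lam q tau beta 1 i" and "k = (ds - d) / (sqrt 2 * s)"
  have sd_g: "sd n lam q tau beta g l = g * sd n lam q tau beta 1 l" for l
    using sd_scale[of _ _ _ _ _ g] assms by simp
  have corr_g: "corr n lam q tau beta g j i = corr n lam q tau beta 1 j i"
    using corr_scale[of g] assms by simp
  have exponent: "(ds - d)\<^sup>2 / (2 * (g * s)\<^sup>2) = (k / g)\<^sup>2"
    by (simp add: k_def power_divide power_mult_distrib)
  have argument: "(ds - d) / (sqrt 2 * (g * s)) = k / g"
    by (simp add: k_def field_simps)
  show ?thesis
    unfolding condexp_def scaled_inverse_mills_def sd_g corr_g s_def[symmetric] k_def[symmetric]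
      exponent argument
    using assms one_plus_erf_pos[of "k / g"] by (simp add: field_simps)
qed

lemma hfun_eq_condexp:
  assumes "0 < g0" and "- 1 < e"
  shows "hfun n lam q tau beta g0 d ds i j e = condexp n lam q tau beta d ds i j (g0 * sqrt (1 + e))"
proof -
  have sd_e: "sd n lam q tau beta (g0 * sqrt (1 + e)) l = sqrt (1 + e) * sd n lam q tau beta g0 l" for l
    using sd_scale[of _ _ _ _ _ g0] sd_scale[of _ _ _ _ _ "g0 * sqrt (1 + e)"] assms by simp
  have corr_e: "corr n lam q tau beta (g0 * sqrt (1 + e)) j i = corr n lam q tau beta g0 j i"
    using corr_scale[of g0] corr_scale[of "g0 * sqrt (1 + e)"] assms by simp
  have square: "2 * (sqrt (1 + e) * x)\<^sup>2 = 2 * x\<^sup>2 * (1 + e)" for x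
    using assms by (simp add: power_mult_distrib)
  have root: "sqrt 2 * (sqrt (1 + e) * x) = sqrt (2 * (1 + e)) * x" for x
    by (simp only: real_sqrt_mult mult.assoc)
  show ?thesis
    unfolding hfun_def condexp_def sd_e corr_e square root by (simp only: mult_ac)
qed

lemma condexp_mono_on:
  assumes "0 \<le> tau" and "corr n lam q tau beta 1 j i < 0"
  shows "mono_on {0<..} (condexp n lam q tau beta d ds i j)"
proof (rule mono_onI)
  fix r s :: real
  assume "r \<in> {0<..}" "s \<in> {0<..}" "r \<le> s"
  define k where "k = (ds - d) / (sqrt 2 * sd n lam q tau beta 1 i)"
  have "0 < sd n lam q tau beta 1 j"
    using assms by (intro sd_pos_if_corr_nonzero[where i = i]) auto
  then have "sqrt (2 / pi) * corr n lam q tau beta 1 j i * sd n lam q tau beta 1 j < 0"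
    using assms(2) by (intro mult_neg_pos mult_pos_neg) auto
  moreover have "scaled_inverse_mills k r \<le> scaled_inverse_mills k s"
    using \<open>r \<in> {0<..}\<close> \<open>s \<in> {0<..}\<close> \<open>r \<le> s\<close> by (rule mono_onD[OF scaled_inverse_mills_mono_on])
  ultimately show "condexp n lam q tau beta d ds i j r \<le> condexp n lam q tau beta d ds i j s"
    using \<open>r \<in> {0<..}\<close> \<open>s \<in> {0<..}\<close>
    by (simp add: condexp_eq_scaled_inverse_mills k_def[symmetric] mult_left_mono_neg)
qed

lemma condexp_antimono_on:
  assumes "0 \<le> tau" and "0 < corr n lam q tau beta 1 j i"
  shows "antimono_on {0<..} (condexp n lam q tau beta d ds i j)"
proof (rule monotone_onI)
  fix r s :: real
  assume "r \<in> {0<..}" "s \<in> {0<..}" "r \<le> s"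
  define k where "k = (ds - d) / (sqrt 2 * sd n lam q tau beta 1 i)"
  have "0 < sd n lam q tau beta 1 j"
    using assms by (intro sd_pos_if_corr_nonzero[where i = i]) auto
  then have "0 < sqrt (2 / pi) * corr n lam q tau beta 1 j i * sd n lam q tau beta 1 j"
    using assms(2) by simp
  moreover have "scaled_inverse_mills k r \<le> scaled_inverse_mills k s"
    using \<open>r \<in> {0<..}\<close> \<open>s \<in> {0<..}\<close> \<open>r \<le> s\<close> by (rule mono_onD[OF scaled_inverse_mills_mono_on])
  ultimately show "condexp n lam q tau beta d ds i j s \<le> condexp n lam q tau beta d ds i j r"
    using \<open>r \<in> {0<..}\<close> \<open>s \<in> {0<..}\<close>
    by (simp add: condexp_eq_scaled_inverse_mills k_def[symmetric] mult_left_mono)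
qed

lemma ambiguity_set_eq_atLeastAtMost:
  assumes "0 < g0" and "0 \<le> eps" and "eps < 1"
  shows "ambiguity_set g0 eps = {g0 * sqrt (1 - eps) .. g0 * sqrt (1 + eps)}"
proof (intro set_eqI iffI)
  have le_iff_sq: "x \<le> y \<longleftrightarrow> x\<^sup>2 \<le> y\<^sup>2" if "0 < x" "0 < y" for x y :: real
    using abs_le_square_iff[of x y] that by simp
  have lo: "0 < g0 * sqrt (1 - eps)" "(g0 * sqrt (1 - eps))\<^sup>2 = (1 - eps) * g0\<^sup>2"
    using assms by (simp_all add: power_mult_distrib)
  have hi: "0 < g0 * sqrt (1 + eps)" "(g0 * sqrt (1 + eps))\<^sup>2 = (1 + eps) * g0\<^sup>2"
    using assms by (simp_all add: power_mult_distrib)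
  fix g
  show "g \<in> {g0 * sqrt (1 - eps) .. g0 * sqrt (1 + eps)}" if "g \<in> ambiguity_set g0 eps"
    using that le_iff_sq[OF lo(1), of g] le_iff_sq[OF _ hi(1), of g] lo(2) hi(2)
    by (simp add: ambiguity_set_def)
  show "g \<in> ambiguity_set g0 eps" if "g \<in> {g0 * sqrt (1 - eps) .. g0 * sqrt (1 + eps)}"
  proof -
    have "0 < g"
      using that lo(1) by simp
    then show ?thesis
      using that le_iff_sq[OF lo(1), of g] le_iff_sq[OF _ hi(1), of g] lo(2) hi(2)
      by (simp add: ambiguity_set_def)
  qed
qed

lemma INF_condexp_corr_neg:
  assumes "0 \<le> tau" and "corr n lam q tau beta 1 j i < 0"
    and "0 < g0" and "0 \<le> eps" and "eps < 1"
  shows "(INF g\<in>ambiguity_set g0 eps. condexp n lam q tau beta d ds i j g)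
    = hfun n lam q tau beta g0 d ds i j (- eps)"
proof -
  let ?E = "condexp n lam q tau beta d ds i j"
  have "0 < g0 * sqrt (1 - eps)" and lo_le_hi: "g0 * sqrt (1 - eps) \<le> g0 * sqrt (1 + eps)"
    using assms(3-5) by simp_all
  then have "{g0 * sqrt (1 - eps) .. g0 * sqrt (1 + eps)} \<subseteq> {0<..}"
    by auto
  with condexp_mono_on[OF assms(1,2)] have "mono_on {g0 * sqrt (1 - eps) .. g0 * sqrt (1 + eps)} ?E"
    by (rule mono_on_subset)
  with lo_le_hi have "(INF g\<in>ambiguity_set g0 eps. ?E g) = ?E (g0 * sqrt (1 - eps))"
    using assms(3-5) by (simp add: ambiguity_set_eq_atLeastAtMost cINF_atLeastAtMost_mono_on)
  also have "\<dots> = hfun n lam q tau beta g0 d ds i j (- eps)"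
    using assms(3,5) by (simp add: hfun_eq_condexp)
  finally show ?thesis .
qed

lemma INF_condexp_corr_pos:
  assumes "0 \<le> tau" and "0 < corr n lam q tau beta 1 j i"
    and "0 < g0" and "0 \<le> eps" and "eps < 1"
  shows "(INF g\<in>ambiguity_set g0 eps. condexp n lam q tau beta d ds i j g)
    = hfun n lam q tau beta g0 d ds i j eps"
proof -
  let ?E = "condexp n lam q tau beta d ds i j"
  have "0 < g0 * sqrt (1 - eps)" and lo_le_hi: "g0 * sqrt (1 - eps) \<le> g0 * sqrt (1 + eps)"
    using assms(3-5) by simp_all
  then have "{g0 * sqrt (1 - eps) .. g0 * sqrt (1 + eps)} \<subseteq> {0<..}"
    by auto
  with condexp_antimono_on[OF assms(1,2)] have "antimono_on {g0 * sqrt (1 - eps) .. g0 * sqrt (1 + eps)} ?E"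
    by (rule monotone_on_subset)
  with lo_le_hi have "(INF g\<in>ambiguity_set g0 eps. ?E g) = ?E (g0 * sqrt (1 + eps))"
    using assms(3-5) by (simp add: ambiguity_set_eq_atLeastAtMost cINF_atLeastAtMost_antimono_on)
  also have "\<dots> = hfun n lam q tau beta g0 d ds i j eps"
    using assms(3,4) by (simp add: hfun_eq_condexp)
  finally show ?thesis .
qed

lemma INF_condexp_corr_zero:
  assumes "corr n lam q tau beta 1 j i = 0"
    and "0 < g0" and "0 \<le> eps" and "eps < 1"
  shows "(INF g\<in>ambiguity_set g0 eps. condexp n lam q tau beta d ds i j g) = d"
proof -
  have "condexp n lam q tau beta d ds i j g = d" if "g \<in> ambiguity_set g0 eps" for g
    using that assms(1) by (simp add: ambiguity_set_def condexp_eq_scaled_inverse_mills)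
  moreover have "g0 \<in> ambiguity_set g0 eps"
    using assms(2,3) by (simp add: ambiguity_set_def)
  ultimately show ?thesis
    by (simp cong: INF_cong) (rule cINF_const, blast)
qed

theorem theorem2:
  fixes n i j :: nat
    and w L :: "nat \<Rightarrow> nat \<Rightarrow> real" and lam :: "nat \<Rightarrow> real" and q :: "nat \<Rightarrow> nat \<Rightarrow> real"
    and beta tau d c delta g0 eps :: real
  assumes "n \<ge> 3"
    and "is_graph_laplacian n w L"
    and "is_eigendecomp n L lam q"
    and "d > 0" and "beta > 0" and "tau > 0"
    and "\<forall>k\<in>{2..n}. (lam k * tau, beta * tau) \<in> stab_region"
    and "i \<in> {1..n-1}" and "j \<in> {1..n-1}" and "i \<noteq> j"
    and "delta \<ge> 0" and "c > 0"
    and "g0 > 0" and "0 < eps" and "eps < 1"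
  shows "let ds = d / (delta + c);
             E = condexp n lam q tau beta d ds i j;
             rho = corr n lam q tau beta g0 j i;
             h = hfun n lam q tau beta g0 d ds i j;
             R = cascading_risk n lam q tau beta g0 eps d ds i j
         in (rho < 0 \<longrightarrow> mono_on {0<..} E) \<and>
            (rho > 0 \<longrightarrow> antimono_on {0<..} E) \<and>
            (rho < 0 \<longrightarrow> R = d / h (- eps) - 1) \<and>
            (rho > 0 \<longrightarrow> R = d / h eps - 1) \<and>
            (rho = 0 \<longrightarrow> R = 0)"
proof -
  let ?rho = "corr n lam q tau beta 1 j i"
  have rho: "corr n lam q tau beta g0 j i = ?rho"
    using \<open>g0 > 0\<close> by (intro corr_scale) simp
  have "0 \<le> tau" "0 \<le> eps"
    using \<open>tau > 0\<close> \<open>eps > 0\<close> by simp_all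
  note INF_facts = INF_condexp_corr_neg[OF \<open>0 \<le> tau\<close> _ \<open>g0 > 0\<close> \<open>0 \<le> eps\<close> \<open>eps < 1\<close>]
    INF_condexp_corr_pos[OF \<open>0 \<le> tau\<close> _ \<open>g0 > 0\<close> \<open>0 \<le> eps\<close> \<open>eps < 1\<close>]
    INF_condexp_corr_zero[OF _ \<open>g0 > 0\<close> \<open>0 \<le> eps\<close> \<open>eps < 1\<close>]
  show ?thesis
    unfolding Let_def cascading_risk_def rho
  proof (intro conjI impI)
    show "mono_on {0<..} (condexp n lam q tau beta d (d / (delta + c)) i j)" if "?rho < 0"
      using \<open>0 \<le> tau\<close> that by (rule condexp_mono_on)
    show "antimono_on {0<..} (condexp n lam q tau beta d (d / (delta + c)) i j)" if "0 < ?rho"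
      using \<open>0 \<le> tau\<close> that by (rule condexp_antimono_on)
  qed (use INF_facts \<open>d > 0\<close> in simp_all)
qed

end
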